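(* Let $n \ge 3$. For $n$-simplices in $\mathbb{E}^n$ with vertices labeled $1,\dots,n+1$, let $E = (l_e)_e$ be the vector of the $n(n+1)/2$ edge lengths (indexed by the $2$-element subsets $e$ of $\{1,\dots,n+1\}$) and let $F = (V_S)_S$ be the vector of the $n(n+1)/2$ $(n-2)$-dimensional volumes of the $(n-2)$-dimensional faces (indexed by the $(n-1)$-element subsets $S$ of $\{1,\dots,n+1\}$), regarded as a function of $E$. Let $p_1$ be the edge-length vector of the regular simplex with all edge lengths equal to $1$, and let $J(p_1) = \partial F/\partial E$ be the Jacobian matrix at $p_1$. Let $M$ be the matrix with rows indexed by the $(n-1)$-subsets $S$ and columns indexed by the $2$-subsets $e$, with $M_{S,e} = 1$ if $e \subset S$ (i.e. the edge $e$ is an edge of the face $S$) and $M_{S,e} = 0$ otherwise. Then there is a constant $c \neq 0$ such that $J(p_1) = c\,M$.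
   Context: An $n$-simplex in $\mathbb{E}^n$ is determined up to congruence by its edge lengths, so the face volumes are functions of the edge lengths near $p_1$. *)

theory Defs
  imports "HOL-Analysis.Analysis"
begin

text \<open>Vertices are labelled 1..n+1; a configuration is a map from labels to points of
  Euclidean space real^'n, where n = CARD('n).\<close>

definition simplex_edges :: "nat \<Rightarrow> nat set set" where
  "simplex_edges n = {e. e \<subseteq> {1..n+1} \<and> card e = 2}"

definition simplex_faces :: "nat \<Rightarrow> nat set set" where
  "simplex_faces n = {S. S \<subseteq> {1..n+1} \<and> card S = n - 1}"

definition is_simplex :: "(nat \<Rightarrow> real^'n) \<Rightarrow> bool" where
  "is_simplex x \<longleftrightarrow> inj_on x {1..CARD('n)+1} \<and>
     \<not> affine_dependent (x ` {1..CARD('n)+1})"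

definition edge_lengths :: "(nat \<Rightarrow> real^'n) \<Rightarrow> nat set \<Rightarrow> real" where
  "edge_lengths x e =
     (if e \<in> simplex_edges CARD('n) then dist (x (Min e)) (x (Max e)) else 0)"

text \<open>Gram determinant of the edge vectors of the face S emanating from its smallest vertex
  (Leibniz expansion of the determinant over the index set S - {Min S}).\<close>
definition face_gram_det :: "(nat \<Rightarrow> 'a::real_inner) \<Rightarrow> nat set \<Rightarrow> real" where
  "face_gram_det x S =
     (let a = Min S; T = S - {a} in
      \<Sum>p | p permutes T. of_int (sign p) *
         (\<Prod>i\<in>T. (x i - x a) \<bullet> (x (p i) - x a)))"

definition face_volume :: "(nat \<Rightarrow> 'a::real_inner) \<Rightarrow> nat set \<Rightarrow> real" where
  "face_volume x S = sqrt (face_gram_det x S) / fact (card S - 1)"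

text \<open>F as a function of the edge-length vector E: the (n-2)-face volumes of an n-simplex
  in E^n with edge lengths E (well defined up to congruence; arbitrary if E is not realisable).\<close>
definition face_volumes_of_edges :: "'n::finite itself \<Rightarrow> (nat set \<Rightarrow> real) \<Rightarrow> nat set \<Rightarrow> real" where
  "face_volumes_of_edges _ E S =
     face_volume (SOME x :: nat \<Rightarrow> real^'n. is_simplex x \<and> edge_lengths x = E) S"

definition regular_edges :: "nat \<Rightarrow> nat set \<Rightarrow> real" where
  "regular_edges n e = (if e \<in> simplex_edges n then 1 else 0)"

definition edge_unit :: "nat set \<Rightarrow> nat set \<Rightarrow> real" where
  "edge_unit e = (\<lambda>e'. if e' = e then 1 else 0)"

definition incidence :: "nat set \<Rightarrow> nat set \<Rightarrow> real" where
  "incidence S e = (if e \<subseteq> S then 1 else 0)"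

end

theory Submission
  imports Defs
begin

text \<open>
  Let S be a face and a its smallest vertex. By the law of cosines the Gram matrix of the edge
  vectors of S at a is a polynomial in the squared edge lengths. At the unit regular simplex it
  is (I + J)/2, whose determinant is (m + 1)/2^m and whose adjugate is proportional to
  (m + 1) I - J. Lengthening the edge e moves the Gram matrix in a direction H, so by Jacobi's
  formula the derivative of the Gram determinant is proportional to (m + 1) tr H - \<Sigma> H, which
  works out to be the incidence [e \<subseteq> S]; the square root and the factor 1/m! only change the
  constant. Since face volumes are defined through a realizing simplex, one also needs the
  perturbed edge lengths to be realizable near t = 0: a bipyramid over a regular simplex of
  dimension n - 2 does this explicitly.
\<close>

section \<open>Leibniz determinants over finite index sets\<close>

definition det_on :: "'a set \<Rightarrow> ('a \<Rightarrow> 'a \<Rightarrow> real) \<Rightarrow> real" where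
  "det_on T g = (\<Sum>p | p permutes T. of_int (sign p) * (\<Prod>i\<in>T. g i (p i)))"

lemma det_on_cong:
  assumes "\<And>i j. i \<in> T \<Longrightarrow> j \<in> T \<Longrightarrow> g i j = g' i j"
  shows "det_on T g = det_on T g'"
  unfolding det_on_def
  by (intro sum.cong refl arg_cong2[where f="(*)"] prod.cong) (auto intro!: assms simp: permutes_in_image)

lemma det_on_upd_row_cong:
  assumes "\<And>j. j \<in> T \<Longrightarrow> r j = r' j"
  shows "det_on T (g(k := r)) = det_on T (g(k := r'))"
  by (rule det_on_cong) (simp add: assms)

lemma det_on_upd_row_expand:
  assumes "finite T" "k \<in> T"
  shows "det_on T (g(k := r)) =
    (\<Sum>p | p permutes T. of_int (sign p) * (r (p k) * (\<Prod>i\<in>T-{k}. g i (p i))))"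
  unfolding det_on_def
  by (intro sum.cong refl arg_cong2[where f="(*)"]) (simp add: prod.remove[OF assms])

lemma det_on_upd_row_scale:
  assumes "finite T" "k \<in> T"
  shows "det_on T (g(k := (\<lambda>j. c * r j))) = c * det_on T (g(k := r))"
  unfolding det_on_upd_row_expand[OF assms] sum_distrib_left
  by (intro sum.cong refl) (simp add: algebra_simps)

lemma det_on_upd_row_add:
  assumes "finite T" "k \<in> T"
  shows "det_on T (g(k := (\<lambda>j. r j + r' j))) = det_on T (g(k := r)) + det_on T (g(k := r'))"
  unfolding det_on_upd_row_expand[OF assms] sum.distrib[symmetric]
  by (intro sum.cong refl) (simp add: algebra_simps)

lemma det_on_upd_row_sum:
  assumes "finite T" "k \<in> T" "finite A"
  shows "det_on T (g(k := (\<lambda>j. \<Sum>l\<in>A. f l j))) = (\<Sum>l\<in>A. det_on T (g(k := f l)))"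
  using assms(3)
proof (induction A rule: finite_induct)
  case empty
  show ?case
    using det_on_upd_row_scale[OF assms(1,2), of g 0 "\<lambda>_. 0"] by (simp only: sum.empty mult_zero_left)
next
  case (insert l A)
  then show ?case
    by (simp only: sum.insert[OF insert.hyps] det_on_upd_row_add[OF assms(1,2)] insert.IH)
qed

lemma det_on_upd_row_unit_expand:
  assumes "finite T" "k \<in> T"
  shows "det_on T (g(k := r)) = (\<Sum>l\<in>T. r l * det_on T (g(k := (\<lambda>j. of_bool (j = l)))))"
proof -
  have "det_on T (g(k := r)) = det_on T (g(k := (\<lambda>j. \<Sum>l\<in>T. r l * of_bool (j = l))))"
  proof (rule det_on_upd_row_cong)
    fix j assume "j \<in> T"
    then have "T \<inter> {l. j = l} = {j}"
      by auto
    then show "r j = (\<Sum>l\<in>T. r l * of_bool (j = l))"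
      using assms(1) by simp
  qed
  also have "\<dots> = (\<Sum>l\<in>T. r l * det_on T (g(k := (\<lambda>j. of_bool (j = l)))))"
    by (simp only: det_on_upd_row_sum[OF assms assms(1)] det_on_upd_row_scale[OF assms])
  finally show ?thesis .
qed

lemma det_on_upd_row_repeated:
  assumes T: "finite T" and k: "k \<in> T" and l: "l \<in> T" and "k \<noteq> l"
  shows "det_on T (g(k := g l)) = 0"
proof -
  let ?t = "Transposition.transpose k l"
  let ?f = "\<lambda>p. of_int (sign p) * (g l (p k) * (\<Prod>i\<in>T-{k}. g i (p i)))"
  have split: "T - {k} = insert l (T - {k, l})"
    using l \<open>k \<noteq> l\<close> by auto
  have swap: "?f (p \<circ> ?t) = - ?f p" if p: "p permutes T" for p
  proof -
    have "sign (p \<circ> ?t) = - sign p"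
      using sign_compose[OF permutes_imp_permutation[OF T p] permutation_swap_id, of k l]
        sign_swap_id[of k l] \<open>k \<noteq> l\<close> by simp
    moreover have "(\<Prod>i\<in>T-{k,l}. g i ((p \<circ> ?t) i)) = (\<Prod>i\<in>T-{k,l}. g i (p i))"
      by (intro prod.cong refl) simp
    ultimately show ?thesis
      using T by (simp add: split)
  qed
  have "sum ?f {p. p permutes T} = sum (\<lambda>p. ?f (p \<circ> ?t)) {p. p permutes T}"
    by (rule sum_permutations_compose_right[OF permutes_swap_id[OF k l]])
  also have "\<dots> = - sum ?f {p. p permutes T}"
    by (subst sum_negf[symmetric], intro sum.cong refl) (rule swap, simp)
  finally have "sum ?f {p. p permutes T} = 0"
    by simp
  then show ?thesis
    by (simp add: det_on_upd_row_expand[OF T k])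
qed

lemma det_on_upd_row_unit_diag:
  assumes "finite T" "k \<in> T"
  shows "det_on T (g(k := (\<lambda>j. of_bool (j = k)))) = det_on (T - {k}) g"
proof -
  have fix_k: "{p. p permutes T} \<inter> {p. p k = k} = {p. p permutes (T - {k})}"
    by (auto simp: permutes_def)
  have "det_on T (g(k := (\<lambda>j. of_bool (j = k)))) =
      (\<Sum>p | p permutes T. of_bool (p k = k) * (of_int (sign p) * (\<Prod>i\<in>T-{k}. g i (p i))))"
    by (simp add: det_on_upd_row_expand[OF assms] mult.left_commute)
  also have "\<dots> = det_on (T - {k}) g"
    using finite_permutations[OF assms(1)] by (simp only: sum_of_bool_mult_eq fix_k det_on_def)
  finally show ?thesis .
qed

lemma has_real_derivative_det_on_perturb:
  assumes "finite T" and phi: "(\<phi> has_real_derivative \<phi>') (at 0)" and "\<phi> 0 = 0"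
  shows "((\<lambda>t. det_on T (\<lambda>i j. a i j + \<phi> t * b i j)) has_real_derivative
            \<phi>' * (\<Sum>k\<in>T. det_on T (a(k := b k)))) (at 0)"
proof -
  have "((\<lambda>t. \<Prod>i\<in>T. a i (p i) + \<phi> t * b i (p i)) has_real_derivative
        (\<Sum>k\<in>T. \<phi>' * b k (p k) * (\<Prod>i\<in>T-{k}. a i (p i)))) (at 0)" for p
  proof -
    have "((\<lambda>t. a i (p i) + \<phi> t * b i (p i)) has_real_derivative \<phi>' * b i (p i)) (at 0)" for i
      by (auto intro!: derivative_eq_intros phi)
    from has_field_derivative_prod[OF this] show ?thesis
      by (simp add: \<open>\<phi> 0 = 0\<close>)
  qed
  hence "((\<lambda>t. det_on T (\<lambda>i j. a i j + \<phi> t * b i j)) has_real_derivative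
     (\<Sum>p | p permutes T. of_int (sign p) * (\<Sum>k\<in>T. \<phi>' * b k (p k) * (\<Prod>i\<in>T-{k}. a i (p i))))) (at 0)"
    unfolding det_on_def by (intro DERIV_sum DERIV_cmult)
  also have "(\<Sum>p | p permutes T. of_int (sign p) * (\<Sum>k\<in>T. \<phi>' * b k (p k) * (\<Prod>i\<in>T-{k}. a i (p i))))
     = \<phi>' * (\<Sum>k\<in>T. det_on T (a(k := b k)))"
    unfolding sum_distrib_left
    by (subst sum.swap) (intro sum.cong refl, simp add: det_on_upd_row_expand[OF \<open>finite T\<close>] sum_distrib_left algebra_simps)
  finally show ?thesis .
qed

section \<open>The Gram matrix of the regular simplex\<close>

text \<open>Gram matrix of the edge vectors at a vertex of the regular simplex with unit edges.\<close>
definition regular_gram :: "'a \<Rightarrow> 'a \<Rightarrow> real" where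
  "regular_gram i j = (if i = j then 1 else 1/2)"

lemma det_on_upd_regular_gram_unit:
  assumes T: "finite T" and k: "k \<in> T" and l: "l \<in> T"
  shows "det_on T (regular_gram(k := (\<lambda>j. of_bool (j = l)))) =
    2 * det_on T regular_gram / (card T + 1) * ((real (card T) + 1) * of_bool (l = k) - 1)"
proof -
  define R where "R = det_on T (regular_gram(k := (\<lambda>_. 1)))"
  define X where "X l = det_on T (regular_gram(k := (\<lambda>j. of_bool (j = l))))" for l
  have row: "det_on T (regular_gram(k := regular_gram l)) = R/2 + X l/2" for l
  proof -
    have "regular_gram l = (\<lambda>j. 1/2 * 1 + 1/2 * of_bool (j = l))"
      by (auto simp: regular_gram_def)
    then show ?thesis
      by (simp only: det_on_upd_row_add[OF T k] det_on_upd_row_scale[OF T k] R_def X_def)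
  qed
  have off_diag: "X l = - R" if "l \<in> T" "l \<noteq> k" for l
    using row[of l] det_on_upd_row_repeated[OF T k that(1)] that(2) by simp
  have "R = (\<Sum>l\<in>T. X l)"
    unfolding R_def X_def by (subst det_on_upd_row_unit_expand[OF T k]) simp
  also have "\<dots> = X k + (\<Sum>l\<in>T-{k}. - R)"
    by (simp add: sum.remove[OF T k] off_diag)
  finally have diag: "X k = card T * R"
    by (simp add: card_Suc_Diff1[OF T k, symmetric] algebra_simps)
  have "det_on T regular_gram = R/2 + X k/2"
    using row[of k] by simp
  then have "R = 2 * det_on T regular_gram / (card T + 1)"
    by (simp add: diag field_simps)
  moreover have "X l = R * ((real (card T) + 1) * of_bool (l = k) - 1)"
    using diag off_diag[OF l] by (cases "l = k") simp_all
  ultimately show ?thesis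
    by (simp add: X_def)
qed

text \<open>Row k of the adjugate of the regular Gram matrix.\<close>
lemma det_on_upd_regular_gram:
  assumes "finite T" "k \<in> T"
  shows "det_on T (regular_gram(k := f)) =
    2 * det_on T regular_gram / (card T + 1) * ((real (card T) + 1) * f k - (\<Sum>l\<in>T. f l))"
proof -
  let ?c = "2 * det_on T regular_gram / (card T + 1)"
  have "det_on T (regular_gram(k := f)) = (\<Sum>l\<in>T. f l * (?c * ((real (card T) + 1) * of_bool (l = k) - 1)))"
    by (subst det_on_upd_row_unit_expand[OF assms], intro sum.cong refl)
      (simp add: det_on_upd_regular_gram_unit assms)
  also have "\<dots> = (\<Sum>l\<in>T. ?c * (real (card T) + 1) * (f l * of_bool (l = k)) - ?c * f l)"
    by (intro sum.cong refl) (simp add: algebra_simps)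
  also have "\<dots> = ?c * ((real (card T) + 1) * (\<Sum>l\<in>T. f l * of_bool (l = k)) - (\<Sum>l\<in>T. f l))"
    by (simp only: sum_subtractf sum_distrib_left[symmetric] right_diff_distrib mult.assoc)
  also have "(\<Sum>l\<in>T. f l * of_bool (l = k)) = f k"
    using assms by simp
  finally show ?thesis .
qed

lemma det_on_regular_gram:
  assumes "finite T"
  shows "det_on T regular_gram = (card T + 1) / 2 ^ card T"
  using assms
proof (induction "card T" arbitrary: T)
  case 0
  then show ?case
    by (simp add: det_on_def)
next
  case (Suc m)
  then obtain k where k: "k \<in> T"
    by fastforce
  have "det_on (T - {k}) regular_gram = 2 * det_on T regular_gram / (m + 2) * (m + 1)"
    using det_on_upd_regular_gram_unit[OF Suc.prems k k] det_on_upd_row_unit_diag[OF Suc.prems k]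
    by (simp add: Suc.hyps(2)[symmetric])
  then have "det_on T regular_gram = (m + 2) / (2 * (m + 1)) * det_on (T - {k}) regular_gram"
    by (simp add: field_simps)
  also have "det_on (T - {k}) regular_gram = (m + 1) / 2 ^ m"
    using Suc k by (simp add: card_Diff_singleton Suc.hyps(2)[symmetric])
  also have "(m + 2) / (2 * (m + 1)) * ((m + 1) / 2 ^ m) = (Suc m + 1) / (2::real) ^ Suc m"
  proof -
    have "real m + 1 \<noteq> 0"
      by linarith
    then show ?thesis
      by (simp add: divide_simps)
  qed
  finally show ?case
    by (simp only: Suc.hyps(2))
qed

section \<open>Face volumes near the regular simplex\<close>

text \<open>Law of cosines; the case i = j relies on edge-length vectors vanishing on singletons.\<close>
definition gram_of_lengths :: "(nat set \<Rightarrow> real) \<Rightarrow> nat \<Rightarrow> nat \<Rightarrow> nat \<Rightarrow> real" where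
  "gram_of_lengths E a i j = ((E {a, i})\<^sup>2 + (E {a, j})\<^sup>2 - (E {i, j})\<^sup>2) / 2"

lemma edge_lengths_doubleton:
  fixes x :: "nat \<Rightarrow> real^'n::finite"
  assumes "u \<in> {1..CARD('n)+1}" "v \<in> {1..CARD('n)+1}"
  shows "edge_lengths x {u, v} = dist (x u) (x v)"
proof (cases "u = v")
  case True
  then show ?thesis
    by (simp add: edge_lengths_def simplex_edges_def)
next
  case False
  then have "{u, v} \<in> simplex_edges CARD('n)"
    using assms by (auto simp: simplex_edges_def)
  then show ?thesis
    by (cases "u < v") (auto simp: edge_lengths_def min_def max_def dist_commute)
qed

lemma inner_diff_eq_gram_of_lengths:
  fixes x :: "nat \<Rightarrow> real^'n::finite"
  assumes "a \<in> {1..CARD('n)+1}" "i \<in> {1..CARD('n)+1}" "j \<in> {1..CARD('n)+1}"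
  shows "(x i - x a) \<bullet> (x j - x a) = gram_of_lengths (edge_lengths x) a i j"
proof -
  have "(x i - x a) \<bullet> (x j - x a) =
      ((norm (x a - x i))\<^sup>2 + (norm (x a - x j))\<^sup>2 - (norm (x i - x j))\<^sup>2) / 2"
    by (simp add: power2_norm_eq_inner inner_diff_left inner_diff_right inner_commute algebra_simps)
  then show ?thesis
    using assms by (simp add: gram_of_lengths_def edge_lengths_doubleton dist_norm)
qed

lemma face_gram_det_eq_det_on:
  fixes x :: "nat \<Rightarrow> real^'n::finite"
  assumes S: "S \<subseteq> {1..CARD('n)+1}"
  shows "face_gram_det x S = det_on (S - {Min S}) (gram_of_lengths (edge_lengths x) (Min S))"
  unfolding face_gram_det_def Let_def det_on_def
proof (intro sum.cong refl arg_cong2[where f="(*)"] prod.cong)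
  fix p i
  assume p: "p \<in> {p. p permutes S - {Min S}}" and i: "i \<in> S - {Min S}"
  have "Min S \<in> S"
    using i S finite_subset by (intro Min_in) auto
  moreover have "p i \<in> S - {Min S}"
    using p i permutes_in_image[of p "S - {Min S}" i] by simp
  ultimately show "(x i - x (Min S)) \<bullet> (x (p i) - x (Min S)) =
      gram_of_lengths (edge_lengths x) (Min S) i (p i)"
    using i S by (intro inner_diff_eq_gram_of_lengths) auto
qed

lemma face_volumes_of_edges_eq:
  assumes "\<exists>x::nat \<Rightarrow> real^'n::finite. is_simplex x \<and> edge_lengths x = E"
    and "S \<subseteq> {1..CARD('n)+1}"
  shows "face_volumes_of_edges TYPE('n) E S =
    sqrt (det_on (S - {Min S}) (gram_of_lengths E (Min S))) / fact (card S - 1)"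
proof -
  define x where "x = (SOME x :: nat \<Rightarrow> real^'n. is_simplex x \<and> edge_lengths x = E)"
  have "edge_lengths x = E"
    unfolding x_def using someI_ex[OF assms(1)] by blast
  then show ?thesis
    unfolding face_volumes_of_edges_def x_def[symmetric] face_volume_def
    using face_gram_det_eq_det_on[OF assms(2), of x] by simp
qed

definition perturb_edge :: "nat \<Rightarrow> nat set \<Rightarrow> real \<Rightarrow> nat set \<Rightarrow> real" where
  "perturb_edge n e t = (\<lambda>e'. regular_edges n e' + t * edge_unit e e')"

lemma perturb_edge_doubleton:
  assumes "u \<in> {1..n+1}" "v \<in> {1..n+1}"
  shows "perturb_edge n e t {u, v} = of_bool (u \<noteq> v) + t * of_bool ({u, v} = e)"
  using assms by (cases "u = v") (auto simp: perturb_edge_def regular_edges_def simplex_edges_def edge_unit_def)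

definition gram_direction :: "nat set \<Rightarrow> nat \<Rightarrow> nat \<Rightarrow> nat \<Rightarrow> real" where
  "gram_direction e a i j = (of_bool ({a, i} = e) + of_bool ({a, j} = e) - of_bool ({i, j} = e)) / 2"

lemma gram_of_lengths_perturb_edge:
  assumes "card e = 2" "a \<in> {1..n+1}" "i \<in> {1..n+1}" "j \<in> {1..n+1}" "i \<noteq> a" "j \<noteq> a"
  shows "gram_of_lengths (perturb_edge n e t) a i j =
    regular_gram i j + (2*t + t\<^sup>2) * gram_direction e a i j"
proof -
  have sq: "(1 + t * of_bool P)\<^sup>2 = 1 + (2*t + t\<^sup>2) * of_bool P" for P
    by (simp add: power2_eq_square algebra_simps)
  have "{i} \<noteq> e"
    using assms(1) by auto
  then have "perturb_edge n e t {i} = 0"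
    using perturb_edge_doubleton[OF assms(3) assms(3)] by simp
  then show ?thesis
    using assms \<open>{i} \<noteq> e\<close> by (cases "i = j")
      (simp_all add: gram_of_lengths_def perturb_edge_doubleton sq regular_gram_def gram_direction_def
        field_simps)
qed

lemma sum_of_bool_doubleton_eq_left:
  assumes "finite T" "a \<notin> T" "card e = 2"
  shows "(\<Sum>k\<in>T. of_bool ({a, k} = e) :: real) = of_bool (a \<in> e \<and> e \<subseteq> insert a T)"
proof -
  obtain u v where e: "e = {u, v}" "u \<noteq> v"
    using assms(3) by (auto simp: card_2_iff)
  have "T \<inter> {k. {a, k} = e} = (if a \<in> e \<and> e \<subseteq> insert a T then {if a = u then v else u} else {})"
    using assms(2) e by (auto simp: doubleton_eq_iff)
  then show ?thesis
    using assms(1) by simp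
qed

lemma sum_sum_of_bool_doubleton_eq:
  assumes "finite T" "card e = 2"
  shows "(\<Sum>k\<in>T. \<Sum>l\<in>T. of_bool ({k, l} = e) :: real) = 2 * of_bool (e \<subseteq> T)"
proof -
  obtain u v where e: "e = {u, v}" "u \<noteq> v"
    using assms(2) by (auto simp: card_2_iff)
  have split: "of_bool ({k, l} = e) = (of_bool (k = u) * of_bool (l = v) + of_bool (k = v) * of_bool (l = u) :: real)"
    for k l
    using e by (auto simp: doubleton_eq_iff)
  have count: "(\<Sum>k\<in>T. of_bool (k = w) :: real) = of_bool (w \<in> T)" for w
  proof -
    have "T \<inter> {k. k = w} = (if w \<in> T then {w} else {})"
      by auto
    then show ?thesis
      using assms(1) by simp
  qed
  have "(\<Sum>k\<in>T. \<Sum>l\<in>T. of_bool ({k, l} = e) :: real) =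
      (\<Sum>k\<in>T. of_bool (k = u)) * (\<Sum>l\<in>T. of_bool (l = v)) +
      (\<Sum>k\<in>T. of_bool (k = v)) * (\<Sum>l\<in>T. of_bool (l = u))"
    by (simp only: split sum.distrib sum_product)
  then show ?thesis
    using e by (simp add: count)
qed

text \<open>
  Jacobi's formula at the regular Gram matrix: the sum is proportional to
  (m + 1) tr H - \<Sigma> H, where tr H = [a \<in> e \<subseteq> S] and \<Sigma> H = m [a \<in> e \<subseteq> S] - [e \<subseteq> T].
\<close>
lemma sum_det_on_upd_gram_direction:
  assumes T: "finite T" "T \<noteq> {}" and "a \<notin> T" "card e = 2"
  shows "(\<Sum>k\<in>T. det_on T (regular_gram(k := gram_direction e a k))) =
    2 * det_on T regular_gram / (card T + 1) * of_bool (e \<subseteq> insert a T)"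
proof -
  let ?c = "2 * det_on T regular_gram / (card T + 1)" and ?m = "real (card T)"
  define A :: real where "A = of_bool (a \<in> e \<and> e \<subseteq> insert a T)"
  define B :: real where "B = of_bool (e \<subseteq> T)"
  have diag: "(\<Sum>k\<in>T. gram_direction e a k k) = A"
  proof -
    have "{k, k} \<noteq> e" for k
      using \<open>card e = 2\<close> by auto
    then show ?thesis
      using sum_of_bool_doubleton_eq_left[OF T(1) assms(3,4)] by (simp add: gram_direction_def A_def)
  qed
  have total: "(\<Sum>k\<in>T. \<Sum>l\<in>T. gram_direction e a k l) = ?m * A - B"
    using sum_of_bool_doubleton_eq_left[OF T(1) assms(3,4)] sum_sum_of_bool_doubleton_eq[OF T(1) assms(4)]
    by (simp add: gram_direction_def sum_divide_distrib[symmetric] sum.distrib sum_subtractf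
        sum_distrib_left[symmetric] A_def B_def)
  have "(\<Sum>k\<in>T. det_on T (regular_gram(k := gram_direction e a k))) =
      (\<Sum>k\<in>T. ?c * ((?m + 1) * gram_direction e a k k - (\<Sum>l\<in>T. gram_direction e a k l)))"
    using T(1) by (intro sum.cong refl) (simp add: det_on_upd_regular_gram)
  also have "\<dots> = ?c * ((?m + 1) * (\<Sum>k\<in>T. gram_direction e a k k) -
      (\<Sum>k\<in>T. \<Sum>l\<in>T. gram_direction e a k l))"
    by (simp add: sum_distrib_left sum_subtractf right_diff_distrib mult.assoc)
  also have "\<dots> = ?c * ((?m + 1) * A - (?m * A - B))"
    by (simp only: diag total)
  also have "(?m + 1) * A - (?m * A - B) = of_bool (e \<subseteq> insert a T)"
    using \<open>a \<notin> T\<close> by (auto simp: A_def B_def algebra_simps)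
  finally show ?thesis .
qed

lemma has_real_derivative_det_on_regular_gram_perturb:
  assumes "finite T" "T \<noteq> {}" "a \<notin> T" "card e = 2"
  shows "((\<lambda>t. det_on T (\<lambda>i j. regular_gram i j + (2*t + t\<^sup>2) * gram_direction e a i j))
    has_real_derivative 4 * det_on T regular_gram / (card T + 1) * of_bool (e \<subseteq> insert a T)) (at 0)"
proof -
  have "((\<lambda>t::real. 2*t + t\<^sup>2) has_real_derivative 2) (at 0)"
    by (auto intro!: derivative_eq_intros)
  then have "((\<lambda>t. det_on T (\<lambda>i j. regular_gram i j + (2*t + t\<^sup>2) * gram_direction e a i j))
      has_real_derivative 2 * (\<Sum>k\<in>T. det_on T (regular_gram(k := gram_direction e a k)))) (at 0)"
    by (rule has_real_derivative_det_on_perturb[OF assms(1)]) simp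
  then show ?thesis
    by (simp only: sum_det_on_upd_gram_direction[OF assms]) (simp add: field_simps)
qed

lemma has_real_derivative_sqrt_det_on_regular_gram_perturb:
  assumes "finite T" "T \<noteq> {}" "a \<notin> T" "card e = 2"
  shows "((\<lambda>t. sqrt (det_on T (\<lambda>i j. regular_gram i j + (2*t + t\<^sup>2) * gram_direction e a i j))
      / fact (card T)) has_real_derivative
    2 * sqrt (det_on T regular_gram) / fact (card T + 1) * of_bool (e \<subseteq> insert a T)) (at 0)"
proof -
  define D where "D = det_on T regular_gram"
  define L where "L = (\<lambda>t. det_on T (\<lambda>i j. regular_gram i j + (2*t + t\<^sup>2) * gram_direction e a i j))"
  have "D > 0"
    using det_on_regular_gram[OF assms(1)] unfolding D_def by simp
  have dsqrt: "DERIV sqrt (L 0) :> inverse (sqrt D) / 2"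
    using DERIV_real_sqrt[OF \<open>D > 0\<close>] unfolding L_def D_def by simp
  have dL: "(L has_real_derivative 4 * D / (card T + 1) * of_bool (e \<subseteq> insert a T)) (at 0)"
    using has_real_derivative_det_on_regular_gram_perturb[OF assms] unfolding L_def D_def by simp
  have deriv: "((\<lambda>t. sqrt (L t) / fact (card T)) has_real_derivative
      inverse (sqrt D) / 2 * (4 * D / (card T + 1) * of_bool (e \<subseteq> insert a T)) / fact (card T)) (at 0)"
    by (rule DERIV_cdivide[OF DERIV_chain2[OF dsqrt dL]])
  have "inverse (sqrt D) / 2 * (4 * D / (card T + 1) * of_bool (e \<subseteq> insert a T)) / fact (card T) =
      2 * (D / sqrt D) / ((real (card T) + 1) * fact (card T)) * of_bool (e \<subseteq> insert a T)"
    by (simp add: field_simps)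
  also have "\<dots> = 2 * sqrt D / fact (card T + 1) * of_bool (e \<subseteq> insert a T)"
    using \<open>D > 0\<close> by (simp add: real_div_sqrt algebra_simps)
  finally have "inverse (sqrt D) / 2 * (4 * D / (card T + 1) * of_bool (e \<subseteq> insert a T)) / fact (card T) =
      2 * sqrt D / fact (card T + 1) * of_bool (e \<subseteq> insert a T)" .
  with deriv show ?thesis
    unfolding L_def D_def by (simp only:)
qed

lemma face_volume_perturb_edge_eq:
  assumes S: "S \<subseteq> {1..CARD('n::finite)+1}" and "card e = 2"
    and "\<exists>x::nat \<Rightarrow> real^'n. is_simplex x \<and> edge_lengths x = perturb_edge CARD('n) e t"
  shows "face_volumes_of_edges TYPE('n) (perturb_edge CARD('n) e t) S =
    sqrt (det_on (S - {Min S}) (\<lambda>i j. regular_gram i j + (2*t + t\<^sup>2) * gram_direction e (Min S) i j))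
      / fact (card S - 1)"
proof -
  have "det_on (S - {Min S}) (gram_of_lengths (perturb_edge CARD('n) e t) (Min S)) =
      det_on (S - {Min S}) (\<lambda>i j. regular_gram i j + (2*t + t\<^sup>2) * gram_direction e (Min S) i j)"
  proof (rule det_on_cong)
    fix i j
    assume ij: "i \<in> S - {Min S}" "j \<in> S - {Min S}"
    then have "Min S \<in> S"
      using S finite_subset by (intro Min_in) auto
    with ij S show "gram_of_lengths (perturb_edge CARD('n) e t) (Min S) i j =
        regular_gram i j + (2*t + t\<^sup>2) * gram_direction e (Min S) i j"
      by (intro gram_of_lengths_perturb_edge[OF \<open>card e = 2\<close>]) auto
  qed
  then show ?thesis
    using face_volumes_of_edges_eq[OF assms(3) S] by simp
qed

lemma has_real_derivative_face_volume_perturb_edge: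
  assumes n: "CARD('n::finite) \<ge> 3" and S: "S \<in> simplex_faces CARD('n)" and e: "e \<in> simplex_edges CARD('n)"
    and realizable: "\<forall>\<^sub>F t in nhds 0. \<exists>x::nat \<Rightarrow> real^'n. is_simplex x \<and> edge_lengths x = perturb_edge CARD('n) e t"
  shows "((\<lambda>t. face_volumes_of_edges TYPE('n) (perturb_edge CARD('n) e t) S) has_real_derivative
    2 * sqrt (real (CARD('n) - 1) / 2 ^ (CARD('n) - 2)) / fact (CARD('n) - 1) * incidence S e) (at 0)"
proof -
  define T where "T = S - {Min S}"
  have S_range: "S \<subseteq> {1..CARD('n)+1}" and card_S: "card S = CARD('n) - 1" and "card e = 2"
    using S e by (auto simp: simplex_faces_def simplex_edges_def)
  then have "finite S" "S \<noteq> {}"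
    using n finite_subset by fastforce+
  then have S_eq: "S = insert (Min S) T" and "finite T" "Min S \<notin> T"
    unfolding T_def using Min_in by blast+
  have card_T: "card T = CARD('n) - 2" "card S - 1 = card T"
    using card_S \<open>finite S\<close> \<open>S \<noteq> {}\<close> unfolding T_def by (simp_all add: card_Diff_singleton)
  with n have "T \<noteq> {}"
    by auto
  have "card T + 1 = CARD('n) - 1" "det_on T regular_gram = real (CARD('n) - 1) / 2 ^ (CARD('n) - 2)"
    using det_on_regular_gram[OF \<open>finite T\<close>] card_T n by (simp_all add: of_nat_diff)
  moreover have "\<forall>\<^sub>F t in nhds 0. face_volumes_of_edges TYPE('n) (perturb_edge CARD('n) e t) S =
      sqrt (det_on T (\<lambda>i j. regular_gram i j + (2*t + t\<^sup>2) * gram_direction e (Min S) i j)) / fact (card T)"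
    using realizable
    by eventually_elim (simp only: face_volume_perturb_edge_eq[OF S_range \<open>card e = 2\<close>] T_def[symmetric] card_T(2))
  ultimately show ?thesis
    using has_real_derivative_sqrt_det_on_regular_gram_perturb[OF \<open>finite T\<close> \<open>T \<noteq> {}\<close> \<open>Min S \<notin> T\<close> \<open>card e = 2\<close>]
    by (subst DERIV_cong_ev[OF refl _ refl]) (simp_all add: S_eq[symmetric] incidence_def of_bool_def)
qed

section \<open>Realizing the perturbed edge lengths\<close>

lemma affine_independent_if_span_diffs:
  fixes x :: "'i \<Rightarrow> 'a::euclidean_space"
  assumes "finite R" "q \<in> R" "inj_on x R" "card R \<le> DIM('a) + 1"
    and span: "UNIV \<subseteq> span ((\<lambda>i. x i - x q) ` (R - {q}))"
  shows "\<not> affine_dependent (x ` R)"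
proof -
  let ?B = "(\<lambda>i. x i - x q) ` (R - {q})"
  have "card ?B \<le> card (R - {q})"
    using assms(1) by (intro card_image_le) simp
  also have "\<dots> \<le> DIM('a)"
    using assms(1,2,4) by simp
  finally have "independent ?B"
    using span assms(1) by (intro card_le_dim_spanning[of _ UNIV]) simp_all
  moreover have "(\<lambda>y. - x q + y) ` x ` (R - {q}) = ?B"
    by auto
  moreover have "x ` R = insert (x q) (x ` (R - {q}))" "x q \<notin> x ` (R - {q})"
    using assms(2,3) by (auto simp: inj_on_def)
  ultimately show ?thesis
    using affine_dependent_iff_dependent by metis
qed

text \<open>
  The vertices other than p and q are the points w e_(h i) on the coordinate axes other than c0,
  a regular simplex with edge length sqrt 2 w; the apexes p and q are mirror images
  under the reflection of coordinate c0.
\<close>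
definition bipyramid :: "nat \<Rightarrow> nat \<Rightarrow> 'n \<Rightarrow> (nat \<Rightarrow> 'n) \<Rightarrow> real \<Rightarrow> real \<Rightarrow> real \<Rightarrow> nat \<Rightarrow> real^'n::finite"
  where
  "bipyramid p q c0 h w \<delta> \<beta> i =
    (if i = p then (\<chi> c. if c = c0 then \<beta> else \<delta>)
     else if i = q then (\<chi> c. if c = c0 then - \<beta> else \<delta>)
     else axis (h i) w)"

lemma dist_vec_eq_sqrt_sum:
  fixes u v :: "real^'n::finite"
  shows "dist u v = sqrt (\<Sum>c\<in>UNIV. (u$c - v$c)\<^sup>2)"
  unfolding dist_vec_def L2_set_def dist_real_def by simp

context
  fixes p q :: nat and c0 :: "'n::finite" and h :: "nat \<Rightarrow> 'n"
  assumes pq: "p \<noteq> q" and h: "bij_betw h ({1..CARD('n)+1} - {p, q}) (UNIV - {c0})"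
begin

lemma dist_bipyramid_apexes:
  "dist (bipyramid p q c0 h w \<delta> \<beta> p) (bipyramid p q c0 h w \<delta> \<beta> q) = 2 * \<bar>\<beta>\<bar>"
proof -
  have "(\<Sum>c\<in>UNIV. (bipyramid p q c0 h w \<delta> \<beta> p $ c - bipyramid p q c0 h w \<delta> \<beta> q $ c)\<^sup>2) =
      (\<Sum>c\<in>UNIV. if c = c0 then (2 * \<beta>)\<^sup>2 else 0)"
    using pq by (intro sum.cong refl) (auto simp: bipyramid_def)
  also have "\<dots> = (2 * \<beta>)\<^sup>2"
    by simp
  finally show ?thesis
    by (simp only: dist_vec_eq_sqrt_sum real_sqrt_abs abs_mult abs_numeral)
qed

lemma dist_bipyramid_apex_base:
  assumes "r \<in> {p, q}" "i \<in> {1..CARD('n)+1} - {p, q}"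
  shows "dist (bipyramid p q c0 h w \<delta> \<beta> r) (bipyramid p q c0 h w \<delta> \<beta> i) =
    sqrt (\<beta>\<^sup>2 + (\<delta> - w)\<^sup>2 + (real CARD('n) - 2) * \<delta>\<^sup>2)"
proof -
  have "h i \<noteq> c0"
    using h assms(2) by (auto simp: bij_betw_def)
  then have "(\<Sum>c\<in>UNIV. (bipyramid p q c0 h w \<delta> \<beta> r $ c - bipyramid p q c0 h w \<delta> \<beta> i $ c)\<^sup>2) =
      (\<Sum>c\<in>UNIV. \<delta>\<^sup>2 + ((if c = c0 then \<beta>\<^sup>2 - \<delta>\<^sup>2 else 0) + (if c = h i then (\<delta> - w)\<^sup>2 - \<delta>\<^sup>2 else 0)))"
    using assms pq by (intro sum.cong refl) (auto simp: bipyramid_def axis_def power2_eq_square)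
  also have "\<dots> = real CARD('n) * \<delta>\<^sup>2 + (\<beta>\<^sup>2 - \<delta>\<^sup>2) + ((\<delta> - w)\<^sup>2 - \<delta>\<^sup>2)"
    by (simp only: sum.distrib sum_constant sum.delta' finite_UNIV UNIV_I if_True) simp
  also have "\<dots> = \<beta>\<^sup>2 + (\<delta> - w)\<^sup>2 + (real CARD('n) - 2) * \<delta>\<^sup>2"
    by (simp add: algebra_simps)
  finally show ?thesis
    by (simp add: dist_vec_eq_sqrt_sum)
qed

lemma dist_bipyramid_base:
  assumes "i \<in> {1..CARD('n)+1} - {p, q}" "j \<in> {1..CARD('n)+1} - {p, q}" "i \<noteq> j"
  shows "dist (bipyramid p q c0 h w \<delta> \<beta> i) (bipyramid p q c0 h w \<delta> \<beta> j) = sqrt (2 * w\<^sup>2)"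
proof -
  have "h i \<noteq> h j"
    using h assms unfolding bij_betw_def inj_on_def by blast
  then have "(bipyramid p q c0 h w \<delta> \<beta> i $ c - bipyramid p q c0 h w \<delta> \<beta> j $ c)\<^sup>2 =
      (if c = h i then w\<^sup>2 else 0) + (if c = h j then w\<^sup>2 else 0)" for c
    using assms by (cases "c = h i"; cases "c = h j") (simp_all add: bipyramid_def axis_def)
  then have "(\<Sum>c\<in>UNIV. (bipyramid p q c0 h w \<delta> \<beta> i $ c - bipyramid p q c0 h w \<delta> \<beta> j $ c)\<^sup>2) = 2 * w\<^sup>2"
    by (simp only: sum.distrib sum.delta' finite_UNIV UNIV_I if_True) simp
  then show ?thesis
    by (simp add: dist_vec_eq_sqrt_sum)
qed

lemma span_bipyramid_diffs:
  assumes "p \<in> {1..CARD('n)+1}" "q \<in> {1..CARD('n)+1}"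
    and "\<beta> \<noteq> 0" "w \<noteq> 0" "w \<noteq> (real CARD('n) - 1) * \<delta>"
  defines "x \<equiv> bipyramid p q c0 h w \<delta> \<beta>"
  shows "UNIV \<subseteq> span ((\<lambda>i. x i - x q) ` ({1..CARD('n)+1} - {q}))"
    (is "_ \<subseteq> span ?B")
proof -
  let ?O = "{1..CARD('n)+1} - {p, q}"
  define U :: "real^'n" where "U = (\<chi> c. if c = c0 then 0 else 1)"
  have diff_in: "x i - x q \<in> span ?B" if "i \<in> {1..CARD('n)+1}" "i \<noteq> q" for i
    using that by (intro span_base) blast
  have "axis c0 1 = (1 / (2 * \<beta>)) *\<^sub>R (x p - x q)"
    using pq \<open>\<beta> \<noteq> 0\<close> by (simp add: vec_eq_iff x_def bipyramid_def axis_def)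
  then have c0_in: "axis c0 1 \<in> span ?B"
    using diff_in[OF assms(1) pq] by (simp add: span_mul)
  have base_in: "w *\<^sub>R axis (h i) 1 - \<delta> *\<^sub>R U \<in> span ?B" if i: "i \<in> ?O" for i
  proof -
    have "h i \<noteq> c0"
      using h i by (auto simp: bij_betw_def)
    then have eq: "w *\<^sub>R axis (h i) 1 - \<delta> *\<^sub>R U = (x i - x q) - \<beta> *\<^sub>R axis c0 1"
      using i pq by (auto simp: vec_eq_iff x_def bipyramid_def axis_def U_def)
    have "x i - x q \<in> span ?B"
      using i by (intro diff_in) auto
    then show ?thesis
      unfolding eq by (rule span_diff[OF _ span_mul[OF c0_in]])
  qed
  have "(\<Sum>i\<in>?O. axis (h i) 1) = (\<Sum>c\<in>UNIV - {c0}. axis c (1::real))"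
    using sum.reindex[of h ?O "\<lambda>c. axis c (1::real)"] h by (simp add: bij_betw_def)
  also have "\<dots> = U"
    by (simp add: vec_eq_iff U_def axis_def)
  finally have "(\<Sum>i\<in>?O. w *\<^sub>R axis (h i) 1 - \<delta> *\<^sub>R U) = w *\<^sub>R U - \<delta> *\<^sub>R (real (card ?O) *\<^sub>R U)"
    by (simp only: sum_subtractf scaleR_sum_right[symmetric] sum_constant_scaleR)
  also have "real (card ?O) = real CARD('n) - 1"
    using assms(1,2) pq by (simp add: card_Diff_subset of_nat_diff Suc_leI)
  finally have "(\<Sum>i\<in>?O. w *\<^sub>R axis (h i) 1 - \<delta> *\<^sub>R U) = (w - (real CARD('n) - 1) * \<delta>) *\<^sub>R U"
    by (simp add: scaleR_diff_left algebra_simps)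
  moreover have "(\<Sum>i\<in>?O. w *\<^sub>R axis (h i) 1 - \<delta> *\<^sub>R U) \<in> span ?B"
    by (intro span_sum base_in)
  ultimately have U_in: "U \<in> span ?B"
    using span_mul[of _ ?B "1 / (w - (real CARD('n) - 1) * \<delta>)"] assms(5) by fastforce
  have "axis c 1 \<in> span ?B" for c
  proof (cases "c = c0")
    case False
    then have "c \<in> h ` ?O"
      using bij_betw_imp_surj_on[OF h] by blast
    then obtain i where i: "i \<in> ?O" "h i = c"
      by blast
    have "axis c 1 = (1 / w) *\<^sub>R ((w *\<^sub>R axis (h i) 1 - \<delta> *\<^sub>R U) + \<delta> *\<^sub>R U)"
      using \<open>w \<noteq> 0\<close> i by simp
    then show ?thesis
      by (metis span_add span_mul base_in[OF i(1)] U_in)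
  qed (use c0_in in simp)
  then have "Basis \<subseteq> span ?B"
    by (auto simp: Basis_vec_def)
  then show ?thesis
    using span_minimal[OF _ subspace_span] by (metis span_Basis)
qed

lemma dist_bipyramid_eq_perturb_edge:
  assumes "u \<in> {1..CARD('n)+1}" "v \<in> {1..CARD('n)+1}"
    and "w\<^sup>2 = 1/2" "2 * \<beta> = 1 + t" "\<beta> > 0" "\<beta>\<^sup>2 + (\<delta> - w)\<^sup>2 + (real CARD('n) - 2) * \<delta>\<^sup>2 = 1"
  shows "dist (bipyramid p q c0 h w \<delta> \<beta> u) (bipyramid p q c0 h w \<delta> \<beta> v) =
    perturb_edge CARD('n) {p, q} t {u, v}"
proof -
  consider "u = v" | "{u, v} = {p, q}" | "u \<in> {p, q}" "v \<notin> {p, q}" | "u \<notin> {p, q}" "v \<in> {p, q}"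
    | "u \<notin> {p, q}" "v \<notin> {p, q}" "u \<noteq> v"
    by (auto simp: doubleton_eq_iff)
  then show ?thesis
  proof cases
    case 1
    have "perturb_edge CARD('n) {p, q} t {u, u} = 0"
      using perturb_edge_doubleton[OF assms(1) assms(1)] pq by (simp add: doubleton_eq_iff)
    with 1 show ?thesis
      by simp
  next
    case 2
    then have "dist (bipyramid p q c0 h w \<delta> \<beta> u) (bipyramid p q c0 h w \<delta> \<beta> v) = 2 * \<bar>\<beta>\<bar>"
      using dist_bipyramid_apexes[of w \<delta> \<beta>] pq by (auto simp: doubleton_eq_iff dist_commute)
    then show ?thesis
      using 2 assms pq by (auto simp: perturb_edge_doubleton doubleton_eq_iff)
  next
    case 3
    then show ?thesis
      using assms pq dist_bipyramid_apex_base[of u v]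
      by (auto simp: perturb_edge_doubleton doubleton_eq_iff)
  next
    case 4
    then show ?thesis
      using assms pq dist_bipyramid_apex_base[of v u]
      by (auto simp: perturb_edge_doubleton doubleton_eq_iff dist_commute)
  next
    case 5
    then show ?thesis
      using assms dist_bipyramid_base[of u v] by (auto simp: perturb_edge_doubleton doubleton_eq_iff)
  qed
qed

lemma bipyramid_realizes_perturb_edge:
  assumes "p \<in> {1..CARD('n)+1}" "q \<in> {1..CARD('n)+1}"
    and "w > 0" "w\<^sup>2 = 1/2" "2 * \<beta> = 1 + t" "\<beta> > 0"
    and "\<beta>\<^sup>2 + (\<delta> - w)\<^sup>2 + (real CARD('n) - 2) * \<delta>\<^sup>2 = 1" "w \<noteq> (real CARD('n) - 1) * \<delta>"
  defines "x \<equiv> bipyramid p q c0 h w \<delta> \<beta>"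
  shows "is_simplex x \<and> edge_lengths x = perturb_edge CARD('n) {p, q} t"
proof
  have dist: "dist (x u) (x v) = perturb_edge CARD('n) {p, q} t {u, v}"
    if "u \<in> {1..CARD('n)+1}" "v \<in> {1..CARD('n)+1}" for u v
    unfolding x_def using that assms by (intro dist_bipyramid_eq_perturb_edge) auto
  have "inj_on x {1..CARD('n)+1}"
  proof (rule inj_onI, rule ccontr)
    fix u v
    assume "u \<in> {1..CARD('n)+1}" "v \<in> {1..CARD('n)+1}" "x u = x v" "u \<noteq> v"
    then show False
      using dist[of u v] assms(5,6) by (auto simp: perturb_edge_doubleton of_bool_def split: if_splits)
  qed
  moreover have "\<not> affine_dependent (x ` {1..CARD('n)+1})"
    using assms(1-4,6,8) \<open>inj_on x {1..CARD('n)+1}\<close> unfolding x_def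
    by (intro affine_independent_if_span_diffs[where q = q] span_bipyramid_diffs) auto
  ultimately show "is_simplex x"
    by (simp add: is_simplex_def)
  show "edge_lengths x = perturb_edge CARD('n) {p, q} t"
  proof
    fix f
    show "edge_lengths x f = perturb_edge CARD('n) {p, q} t f"
    proof (cases "f \<in> simplex_edges CARD('n)")
      case True
      then obtain u v where "f = {u, v}" "u \<in> {1..CARD('n)+1}" "v \<in> {1..CARD('n)+1}"
        by (auto simp: simplex_edges_def card_2_iff)
      then show ?thesis
        by (simp add: edge_lengths_doubleton dist)
    next
      case False
      moreover have "{p, q} \<in> simplex_edges CARD('n)"
        using assms(1,2) pq by (auto simp: simplex_edges_def)
      ultimately show ?thesis
        by (auto simp: edge_lengths_def perturb_edge_def regular_edges_def edge_unit_def)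
    qed
  qed
qed

end

lemma exists_quadratic_root_ne:
  fixes N w c :: real
  assumes "N > 0" "w\<^sup>2 + N * c > 0"
  shows "\<exists>\<delta>. N * \<delta>\<^sup>2 - 2 * w * \<delta> = c \<and> w \<noteq> N * \<delta>"
proof
  define r where "r = sqrt (w\<^sup>2 + N * c)"
  have "r > 0" "r\<^sup>2 = w\<^sup>2 + N * c"
    using assms(2) unfolding r_def by simp_all
  then show "N * ((w + r) / N)\<^sup>2 - 2 * w * ((w + r) / N) = c \<and> w \<noteq> N * ((w + r) / N)"
    using assms(1) by (simp add: field_simps power2_eq_square)
qed

lemma perturb_edge_realizable:
  assumes n: "CARD('n::finite) \<ge> 2" and e: "e \<in> simplex_edges CARD('n)"
    and t: "-1 < t" "(1 + t)\<^sup>2 < 2"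
  shows "\<exists>x::nat \<Rightarrow> real^'n. is_simplex x \<and> edge_lengths x = perturb_edge CARD('n) e t"
proof -
  let ?R = "{1..CARD('n)+1}"
  obtain p q where e_eq: "e = {p, q}" and "p \<noteq> q" "p \<in> ?R" "q \<in> ?R"
    using e by (auto simp: simplex_edges_def card_2_iff)
  obtain c0 :: 'n where "c0 \<in> UNIV"
    by blast
  have "card (?R - {p, q}) = card (UNIV - {c0})"
    using \<open>p \<noteq> q\<close> \<open>p \<in> ?R\<close> \<open>q \<in> ?R\<close> by (simp add: card_Diff_subset)
  then obtain h where h: "bij_betw h (?R - {p, q}) (UNIV - {c0})"
    by (metis finite_same_card_bij finite_atLeastAtMost finite_Diff finite)
  text \<open>
    w makes the base edges unit, \<beta> gives the apex edge length 1 + t, and \<delta> makes the edges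
    between apexes and base unit.
  \<close>
  define w :: real where "w = sqrt 2 / 2"
  define \<beta> where "\<beta> = (1 + t) / 2"
  have w: "w > 0" "w\<^sup>2 = 1/2"
    unfolding w_def by (simp_all add: power_divide)
  have \<beta>: "\<beta> > 0" "\<beta>\<^sup>2 < 1/2" "2 * \<beta> = 1 + t"
    using t unfolding \<beta>_def by (simp_all add: power_divide)
  obtain \<delta> where \<delta>: "(real CARD('n) - 1) * \<delta>\<^sup>2 - 2 * w * \<delta> = 1/2 - \<beta>\<^sup>2"
      "w \<noteq> (real CARD('n) - 1) * \<delta>"
  proof -
    have "w\<^sup>2 + (real CARD('n) - 1) * (1/2 - \<beta>\<^sup>2) > 0"
      using n w \<beta> by (intro add_pos_nonneg mult_nonneg_nonneg) auto
    then show ?thesis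
      using exists_quadratic_root_ne[of "real CARD('n) - 1" w "1/2 - \<beta>\<^sup>2"] n that by auto
  qed
  have "\<beta>\<^sup>2 + (\<delta> - w)\<^sup>2 + (real CARD('n) - 2) * \<delta>\<^sup>2 = 1"
    using \<delta>(1) w(2) by (simp add: power2_eq_square algebra_simps)
  then show ?thesis
    using bipyramid_realizes_perturb_edge[OF \<open>p \<noteq> q\<close> h \<open>p \<in> ?R\<close> \<open>q \<in> ?R\<close> w \<beta>(3,1) _ \<delta>(2)] e_eq
    by blast
qed

theorem mainTheorem2:
  assumes "CARD('n::finite) \<ge> 3"
  shows "\<exists>c::real. c \<noteq> 0 \<and>
    (\<forall>S\<in>simplex_faces CARD('n). \<forall>e\<in>simplex_edges CARD('n).
       ((\<lambda>t. face_volumes_of_edges TYPE('n)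
               (\<lambda>e'. regular_edges CARD('n) e' + t * edge_unit e e') S)
          has_real_derivative c * incidence S e) (at 0))"
proof (intro exI conjI ballI)
  show "2 * sqrt (real (CARD('n) - 1) / 2 ^ (CARD('n) - 2)) / fact (CARD('n) - 1) \<noteq> (0::real)"
    using assms by simp
  fix S e
  assume S: "S \<in> simplex_faces CARD('n)" and e: "e \<in> simplex_edges CARD('n)"
  have "\<forall>\<^sub>F t in nhds 0. t \<in> ball 0 (1/4)"
    by (rule eventually_nhds_in_open) auto
  then have "\<forall>\<^sub>F t in nhds 0. \<exists>x::nat \<Rightarrow> real^'n. is_simplex x \<and> edge_lengths x = perturb_edge CARD('n) e t"
  proof eventually_elim
    case (elim t)
    then have "\<bar>t\<bar> < 1/4"
      by simp
    then have "(1 + t)\<^sup>2 \<le> (5/4)\<^sup>2"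
      by (intro power_mono) auto
    also have "(5/4)\<^sup>2 < (2::real)"
      by (simp add: power2_eq_square)
    finally show ?case
      using \<open>\<bar>t\<bar> < 1/4\<close> assms e by (intro perturb_edge_realizable) auto
  qed
  from has_real_derivative_face_volume_perturb_edge[OF assms S e this]
  show "((\<lambda>t. face_volumes_of_edges TYPE('n)
               (\<lambda>e'. regular_edges CARD('n) e' + t * edge_unit e e') S)
          has_real_derivative 2 * sqrt (real (CARD('n) - 1) / 2 ^ (CARD('n) - 2)) / fact (CARD('n) - 1)
            * incidence S e) (at 0)"
    by (simp add: perturb_edge_def)
qed

end
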